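(* Let $t<k$ and $n>2k-t$. Let $\delta$ be an affine $t$-space and $\pi$ an affine $k$-space in $\mathrm{AG}(n,q)$ with $\pi\cap\delta$ an affine $(t-1)$-space. Let $S_1$ be a maximal set of affine $k$-spaces in $\langle\pi,\delta\rangle$, containing $\pi$, such that $\tilde\pi_1\cap H_\infty\neq\tilde\pi_2\cap H_\infty$ for any two distinct $\pi_1,\pi_2\in S_1$ and $\tilde\delta\cap H_\infty\not\subseteq\tilde\pi_1$ for every $\pi_1\in S_1$. Let $S_2$ be the set of all affine $k$-spaces containing $\delta$ and meeting $\langle\pi,\delta\rangle$ in at least a $(t+1)$-space, and $\mathcal{S}=S_1\cup S_2$. Then $\mathcal{S}$ is a maximal set of $k$-spaces in $\mathrm{AG}(n,q)$ pairwise intersecting in at least a $t$-space, and \[|\mathcal{S}|=\theta_k-\theta_{k-t}+\left[{n-t\atop k-t}\right]_q-q^{(k-t+1)(k-t)}\left[{n-k-1\atop k-t}\right]_q=\theta_k+\sum_{j=0}^{k-t-2}\left[{k-t+1\atop j+1}\right]_q q^{(k-t-j)(k-t-j-1)}\left[{n-k-1\atop k-t-j-1}\right]_q.\]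
   Context: $\mathrm{AG}(n,q)$ is viewed as $\mathrm{PG}(n,q)$ minus a hyperplane $H_\infty$; for an affine subspace $\alpha$, $\tilde\alpha$ denotes its projective closure. Affine subspaces intersect in at least a $t$-space if their affine intersection has dimension at least $t$; $\langle\cdot,\cdot\rangle$ is the span. Maximal means no further affine $k$-space can be added while keeping the property. $\left[{n\atop k}\right]_q=\frac{(q^n-1)\cdots(q^{n-k+1}-1)}{(q^k-1)\cdots(q-1)}$ for $k>0$, $=1$ for $k=0$; $\theta_m=\frac{q^{m+1}-1}{q-1}$. *)

theory Defs
  imports "HOL-Analysis.Analysis"
begin

text \<open>AG(n,q) is modelled as the vector space 'a^'n over a finite field 'a,
  with q = CARD('a) and n = CARD('n).\<close>

definition affine_sub :: "('a::field ^ 'n) set \<Rightarrow> bool" where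
  "affine_sub A \<longleftrightarrow> (\<exists>v W. vec.subspace W \<and> A = (\<lambda>w. v + w) ` W)"

text \<open>Direction (linear part) of an affine subspace; for nonempty A this is the
  linear subspace W with A = v + W, i.e. it represents the projective subspace
  closure(A) \<inter> H_\<infinity>.\<close>
definition direction :: "('a::field ^ 'n) set \<Rightarrow> ('a ^ 'n) set" where
  "direction A = {x - y | x y. x \<in> A \<and> y \<in> A}"

definition adim :: "('a::field ^ 'n) set \<Rightarrow> int" where
  "adim A = (if A = {} then -1 else int (vec.dim (direction A)))"

definition aspace :: "int \<Rightarrow> ('a::field ^ 'n) set \<Rightarrow> bool" where
  "aspace d A \<longleftrightarrow> (A = {} \<and> d = -1) \<or> (A \<noteq> {} \<and> affine_sub A \<and> adim A = d)"

definition aspan :: "('a::field ^ 'n) set \<Rightarrow> ('a ^ 'n) set" where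
  "aspan X = \<Inter>{A. affine_sub A \<and> X \<subseteq> A}"

definition meets_in_at_least :: "int \<Rightarrow> ('a::field ^ 'n) set \<Rightarrow> ('a ^ 'n) set \<Rightarrow> bool" where
  "meets_in_at_least t A B \<longleftrightarrow> adim (A \<inter> B) \<ge> t"

definition maximal_t_intersecting :: "nat \<Rightarrow> nat \<Rightarrow> ('a::field ^ 'n) set set \<Rightarrow> bool" where
  "maximal_t_intersecting k t S \<longleftrightarrow>
     (\<forall>A\<in>S. aspace (int k) A) \<and>
     (\<forall>A\<in>S. \<forall>B\<in>S. A \<noteq> B \<longrightarrow> meets_in_at_least (int t) A B) \<and>
     (\<forall>C. aspace (int k) C \<and> C \<notin> S \<longrightarrow> (\<exists>A\<in>S. \<not> meets_in_at_least (int t) C A))"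

definition qbinom :: "real \<Rightarrow> nat \<Rightarrow> nat \<Rightarrow> real" where
  "qbinom q n k = (\<Prod>i<k. (q ^ (n - i) - 1) / (q ^ (i + 1) - 1))"

definition theta :: "real \<Rightarrow> nat \<Rightarrow> real" where
  "theta q m = (q ^ (m + 1) - 1) / (q - 1)"

end

(* Fix a point O of the meet of pi and delta and write pi = O + P, delta = O + D and
   <pi, delta> = O + V, where V = P + D has dimension k + 1.  By the maximality of S1 the directions
   of its members are exactly the k-subspaces of V not containing D, and S2 consists of the spaces
   O + U with U a k-subspace containing D that meets V in more than D.  Both families are counted
   with the number of k-subspaces U with M <= U <= A and U meet N = M, which is
   q^((dim N - dim M) (k - dim M)) [dim A - dim N, k - dim M]_q; the second closed form is the
   q-Vandermonde identity.  Pairwise t-intersection is dimension counting inside V.  For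
   maximality: a k-space outside the family that lies in <pi, delta> is parallel to a member, one
   missing <pi, delta> misses pi, and one crossing <pi, delta> meets some member O + U of S2 in
   less than a t-space, where U extends a (t+1)-space through D in general position; this is
   where n > 2k - t is needed. *)

theory Submission
  imports Defs
begin

section \<open>Gaussian binomial coefficients\<close>

lemma qbinom_0_right [simp]: "qbinom q n 0 = 1"
  by (simp add: qbinom_def)

lemma qbinom_eq_0: "n < k \<Longrightarrow> qbinom q n k = 0"
  unfolding qbinom_def by (rule prod_zero) (auto intro!: bexI[of _ n])

lemma qbinom_Suc_right:
  "qbinom q n (Suc k) = qbinom q n k * (q ^ (n - k) - 1) / (q ^ Suc k - 1)"
  by (simp add: qbinom_def)

lemma qbinom_Suc_Suc:
  "qbinom q (Suc n) (Suc k) = qbinom q n k * (q ^ Suc n - 1) / (q ^ Suc k - 1)"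
proof -
  have "(\<Prod>i<Suc k. q ^ (Suc n - i) - 1) = (q ^ Suc n - 1) * (\<Prod>i<k. q ^ (n - i) - 1)"
    by (subst prod.lessThan_Suc_shift) simp
  then show ?thesis
    unfolding qbinom_def prod_dividef by simp
qed

lemma qbinom_pascal:
  assumes "q > 1"
  shows "qbinom q (Suc n) (Suc k) = q ^ (n - k) * qbinom q n k + qbinom q n (Suc k)"
proof (cases "k \<le> n")
  case True
  define d where "d = q ^ Suc k - 1"
  have "d \<noteq> 0"
    using assms one_less_power[of q "Suc k"] by (simp add: d_def)
  moreover have "q ^ Suc n - 1 = q ^ (n - k) * d + (q ^ (n - k) - 1)"
    using True by (simp add: d_def algebra_simps flip: power_add)
  ultimately show ?thesis
    unfolding qbinom_Suc_Suc[of q n k] qbinom_Suc_right[of q n k] d_def[symmetric]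
    by (simp add: field_simps)
qed (simp add: qbinom_eq_0)

lemma qbinom_Suc_self:
  assumes "q > 1"
  shows "qbinom q (Suc m) m = theta q m"
proof (induction m)
  case (Suc m)
  have "q ^ Suc m - 1 \<noteq> 0"
    using assms one_less_power[of q "Suc m"] by simp
  with Suc show ?case
    by (simp add: qbinom_Suc_Suc theta_def)
qed (use assms in \<open>simp add: theta_def\<close>)

lemma qbinom_vandermonde:
  assumes "q > 1"
  shows "qbinom q (m + N) r = (\<Sum>i\<le>r. qbinom q N i * qbinom q m (r - i) * q ^ ((N - i) * (r - i)))"
proof (induction m arbitrary: r)
  case 0
  have "(\<Sum>i\<le>r. qbinom q N i * qbinom q 0 (r - i) * q ^ ((N - i) * (r - i))) = qbinom q N r"
    by (subst sum.mono_neutral_right[of "{..r}" "{r}"]) (auto simp: qbinom_eq_0)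
  then show ?case by simp
next
  case (Suc m)
  show ?case
  proof (cases r)
    case (Suc s)
    define f where "f i = qbinom q N i * qbinom q m (r - i) * q ^ ((N - i) * (r - i))" for i
    have shift: "q ^ (m + N - s) * (qbinom q N i * qbinom q m (s - i) * q ^ ((N - i) * (s - i)))
        = qbinom q N i * (q ^ (m - (s - i)) * qbinom q m (s - i)) * q ^ ((N - i) * (r - i))"
      if "i \<le> s" for i
    proof (cases "i \<le> N \<and> s - i \<le> m")
      case True
      define a b where "a = N - i" and "b = s - i"
      have "N = i + a" "s = i + b" "b \<le> m"
        using True that by (auto simp: a_def b_def)
      then have "m + N - s + (N - i) * (s - i) = m - (s - i) + (N - i) * (r - i)"
        using \<open>r = Suc s\<close> by simp
      then show ?thesis
        by (simp add: algebra_simps flip: power_add)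
    qed (auto simp: qbinom_eq_0)
    have "qbinom q (Suc m + N) r = q ^ (m + N - s) * qbinom q (m + N) s + qbinom q (m + N) r"
      using qbinom_pascal[OF assms, of "m + N" s] \<open>r = Suc s\<close> by simp
    also have "\<dots> = (\<Sum>i\<le>s. qbinom q N i * (q ^ (m - (s - i)) * qbinom q m (s - i))
        * q ^ ((N - i) * (r - i))) + (\<Sum>i\<le>r. f i)"
      unfolding Suc.IH sum_distrib_left f_def by (simp add: shift)
    also have "\<dots> = (\<Sum>i\<le>r. qbinom q N i * qbinom q (Suc m) (r - i) * q ^ ((N - i) * (r - i)))"
    proof -
      have "qbinom q (Suc m) (r - i) = q ^ (m - (s - i)) * qbinom q m (s - i) + qbinom q m (r - i)"
        if "i \<le> s" for i
        using that qbinom_pascal[OF assms, of m "s - i"] \<open>r = Suc s\<close> by (simp add: Suc_diff_le)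
      then show ?thesis
        using \<open>r = Suc s\<close> by (simp add: f_def sum.distrib algebra_simps)
    qed
    finally show ?thesis .
  qed simp
qed

lemma qbinom_vandermonde_ends:
  assumes "q > 1" and "r > 0"
  shows "qbinom q (m + (r + 1)) r = q ^ ((r + 1) * r) * qbinom q m r + theta q r
    + (\<Sum>j<r - 1. qbinom q (r + 1) (j + 1) * q ^ ((r - j) * (r - j - 1)) * qbinom q m (r - j - 1))"
proof -
  define F where "F i = qbinom q (r + 1) i * qbinom q m (r - i) * q ^ ((r + 1 - i) * (r - i))" for i
  obtain p where r: "r = Suc p"
    using assms(2) gr0_implies_Suc by blast
  have "qbinom q (m + (r + 1)) r = (\<Sum>i\<le>r. F i)"
    unfolding F_def by (rule qbinom_vandermonde[OF assms(1)])
  also have "\<dots> = F 0 + (\<Sum>i<p. F (Suc i)) + F r"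
    unfolding r sum.atMost_Suc_shift by (simp flip: lessThan_Suc_atMost)
  also have "F r = theta q r"
    using qbinom_Suc_self[OF assms(1)] by (simp add: F_def)
  finally show ?thesis
    by (simp add: F_def r ac_simps)
qed

section \<open>Sums and intersections of subspaces\<close>

lemma set_plus_eq_sums: "A + B = {x + y | x y. x \<in> A \<and> y \<in> B}"
  by (auto simp: set_plus_def)

lemma subspace_set_plus:
  "vec.subspace A \<Longrightarrow> vec.subspace B \<Longrightarrow> vec.subspace (A + B)"
  unfolding set_plus_eq_sums by (rule vec.subspace_sums)

lemma dim_set_plus_Int:
  "vec.subspace A \<Longrightarrow> vec.subspace B \<Longrightarrow> vec.dim (A + B) + vec.dim (A \<inter> B) = vec.dim A + vec.dim B"
  unfolding set_plus_eq_sums by (rule vec.dim_sums_Int)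

lemma span_Un_eq_set_plus: "vec.span (A \<union> B) = vec.span A + vec.span B"
  unfolding set_plus_eq_sums by (rule vec.span_Un)

lemma subset_set_plus_left: "vec.subspace B \<Longrightarrow> A \<subseteq> A + B"
  by (force simp: set_plus_def intro: vec.subspace_0)

lemma subset_set_plus_right: "vec.subspace A \<Longrightarrow> B \<subseteq> A + B"
  by (force simp: set_plus_def intro: vec.subspace_0)

lemma set_plus_least: "vec.subspace C \<Longrightarrow> A \<subseteq> C \<Longrightarrow> B \<subseteq> C \<Longrightarrow> A + B \<subseteq> C"
  by (auto simp: set_plus_def intro: vec.subspace_add)

lemma dim_less_if_psubset:
  "vec.subspace A \<Longrightarrow> vec.subspace B \<Longrightarrow> A \<subset> B \<Longrightarrow> vec.dim A < vec.dim B"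
  using vec.dim_psubset[of A B] vec.span_eq_iff by metis

lemma mem_span_insert_iff:
  "vec.subspace U \<Longrightarrow> y \<in> vec.span (insert v U) \<longleftrightarrow> (\<exists>c. y - c *s v \<in> U)"
  using vec.span_insert[of v U] by (simp add: vec.span_eq_iff[THEN iffD2])

lemma dim_span_insert:
  "vec.subspace U \<Longrightarrow> v \<notin> U \<Longrightarrow> vec.dim (vec.span (insert v U)) = vec.dim U + 1"
  using vec.dim_insert[of v U] by (simp add: vec.span_eq_iff[THEN iffD2])

lemma span_insert_Int_eq:
  assumes U: "vec.subspace U" and X: "vec.subspace X" and v: "v \<notin> U + X"
  shows "vec.span (insert v U) \<inter> X = U \<inter> X"
proof
  show "vec.span (insert v U) \<inter> X \<subseteq> U \<inter> X"
  proof
    fix y assume y: "y \<in> vec.span (insert v U) \<inter> X"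
    then obtain c where c: "y - c *s v \<in> U"
      using mem_span_insert_iff[OF U] by auto
    have "c = 0"
    proof (rule ccontr)
      assume "c \<noteq> 0"
      then have "v = (- inverse c) *s (y - c *s v) + inverse c *s y"
        by (simp add: algebra_simps)
      moreover have "(- inverse c) *s (y - c *s v) \<in> U"
        by (rule vec.subspace_scale[OF U c])
      moreover have "inverse c *s y \<in> X"
        using y X by (simp add: vec.subspace_scale)
      ultimately have "v \<in> U + X" by (metis set_plus_intro)
      with v show False ..
    qed
    then show "y \<in> U \<inter> X" using c y by simp
  qed
  show "U \<inter> X \<subseteq> vec.span (insert v U) \<inter> X"
    using vec.span_superset[of "insert v U"] by auto
qed

lemma span_insert_between:
  assumes "vec.subspace D" "vec.subspace V" "D \<subseteq> V" "e \<in> V" "e \<notin> D"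
  shows "vec.subspace (vec.span (insert e D))" "D \<subseteq> vec.span (insert e D)"
    and "vec.span (insert e D) \<subseteq> V" "vec.dim (vec.span (insert e D)) = vec.dim D + 1"
proof -
  show "vec.span (insert e D) \<subseteq> V"
    using assms(2-4) by (intro vec.span_minimal) auto
  show "vec.subspace (vec.span (insert e D))" "D \<subseteq> vec.span (insert e D)"
    "vec.dim (vec.span (insert e D)) = vec.dim D + 1"
    using dim_span_insert[OF assms(1,5)] vec.span_superset[of "insert e D"] by auto
qed

lemma set_plus_eq_if_codim_1:
  assumes W: "vec.subspace W" and X: "vec.subspace X" and V: "vec.subspace V"
    and "W \<subseteq> V" "X \<subseteq> V" "vec.dim V = vec.dim W + 1" "\<not> X \<subseteq> W"
  shows "W + X = V"
proof -
  have "W \<subset> W + X"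
    using subset_set_plus_left[OF X, of W] subset_set_plus_right[OF W, of X] assms(7) by auto
  then have "vec.dim W < vec.dim (W + X)"
    using dim_less_if_psubset[OF W subspace_set_plus[OF W X]] by simp
  moreover have "W + X \<subseteq> V"
    using assms by (intro set_plus_least) auto
  ultimately show ?thesis
    using vec.subspace_dim_equal[OF subspace_set_plus[OF W X] V] assms(6) by simp
qed

section \<open>Counting subspaces over a finite field\<close>

lemma card_field_ge_2: "CARD('a::{field,finite}) \<ge> 2"
proof -
  have "card {0::'a, 1} \<le> CARD('a)" by (rule card_mono) auto
  then show ?thesis by simp
qed

lemma card_subspace:
  fixes W :: "('a::{field,finite}^'n) set"
  assumes "vec.subspace W"
  shows "card W = CARD('a) ^ vec.dim W"
proof -
  obtain B where B: "B \<subseteq> W" "vec.independent B" "W \<subseteq> vec.span B" "card B = vec.dim W"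
    using vec.basis_exists by blast
  have span_B: "vec.span B = W"
    using B assms by (metis subset_antisym vec.span_minimal)
  define comb where "comb c = (\<Sum>v\<in>B. c v *s v)" for c :: "'a^'n \<Rightarrow> 'a"
  have "bij_betw comb (B \<rightarrow>\<^sub>E UNIV) W"
  proof (rule bij_betwI')
    fix c d :: "'a^'n \<Rightarrow> 'a"
    assume c: "c \<in> B \<rightarrow>\<^sub>E UNIV" and d: "d \<in> B \<rightarrow>\<^sub>E UNIV"
    show "comb c = comb d \<longleftrightarrow> c = d"
    proof
      assume "comb c = comb d"
      then have "(\<Sum>v\<in>B. (c v - d v) *s v) = 0"
        by (simp add: comb_def vector_sub_rdistrib sum_subtractf)
      then have "\<forall>v\<in>B. c v - d v = 0"
        using B(2) vec.independent_explicit[of B] by (auto dest!: spec[of _ "\<lambda>v. c v - d v"])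
      then show "c = d" using c d by (auto intro: PiE_ext)
    qed simp
  next
    fix c :: "'a^'n \<Rightarrow> 'a"
    show "comb c \<in> W"
      using span_B vec.span_finite[of B] by (auto simp: comb_def)
  next
    fix w assume "w \<in> W"
    then obtain c where "w = comb c"
      using span_B vec.span_finite[of B] by (auto simp: comb_def)
    then show "\<exists>c'\<in>B \<rightarrow>\<^sub>E UNIV. w = comb c'"
      by (intro bexI[of _ "restrict c B"]) (auto simp: comb_def)
  qed
  then have "card W = card (B \<rightarrow>\<^sub>E (UNIV :: 'a set))"
    by (simp add: bij_betw_same_card)
  then show ?thesis using B by (simp add: card_PiE)
qed

definition indep_mod :: "('a::field^'n) set \<Rightarrow> ('a^'n) list \<Rightarrow> bool" where
  "indep_mod B L \<longleftrightarrow> vec.dim (B \<union> set L) = vec.dim B + length L"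

lemma dim_Un_set_le: "vec.dim (B \<union> set L) \<le> vec.dim B + length L"
proof (induction L arbitrary: B)
  case (Cons x L)
  have "vec.dim (B \<union> set (x # L)) = vec.dim (insert x B \<union> set L)" by simp
  also have "\<dots> \<le> vec.dim (insert x B) + length L" by (rule Cons.IH)
  finally show ?case by (simp add: vec.dim_insert split: if_splits)
qed simp

lemma indep_mod_Nil [simp]: "indep_mod B []"
  by (simp add: indep_mod_def)

lemma indep_mod_Cons [simp]:
  "indep_mod B (x # L) \<longleftrightarrow> x \<notin> vec.span B \<and> indep_mod (insert x B) L"
  using dim_Un_set_le[of "insert x B" L]
  by (auto simp: indep_mod_def vec.dim_insert)

lemma card_indep_mod_lists:
  fixes A B :: "('a::{field,finite}^'n) set"
  assumes "vec.subspace A" "B \<subseteq> A" "vec.dim B + r \<le> vec.dim A"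
  shows "card {L. length L = r \<and> set L \<subseteq> A \<and> indep_mod B L}
       = (\<Prod>i<r. CARD('a) ^ vec.dim A - CARD('a) ^ (vec.dim B + i))"
  using assms(2,3)
proof (induction r arbitrary: B)
  case 0
  have "{L. length L = 0 \<and> set L \<subseteq> A \<and> indep_mod B L} = {[]}" by auto
  then show ?case by simp
next
  case (Suc r)
  define F where "F x = {L. length L = r \<and> set L \<subseteq> A \<and> indep_mod (insert x B) L}" for x
  have lists: "{L. length L = Suc r \<and> set L \<subseteq> A \<and> indep_mod B L} = (\<Union>x\<in>A - vec.span B. (#) x ` F x)"
    by (auto simp: F_def length_Suc_conv)
  have card_F: "card (F x) = (\<Prod>i<r. CARD('a) ^ vec.dim A - CARD('a) ^ (vec.dim B + Suc i))"
    if "x \<in> A - vec.span B" for x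
  proof -
    have "vec.dim (insert x B) = vec.dim B + 1" using that by (simp add: vec.dim_insert)
    then show ?thesis
      unfolding F_def using Suc.prems that by (subst Suc.IH) auto
  qed
  have "vec.span B \<subseteq> A" using Suc.prems assms(1) by (simp add: vec.span_minimal)
  then have card_diff: "card (A - vec.span B) = CARD('a) ^ vec.dim A - CARD('a) ^ vec.dim B"
    using card_subspace[OF assms(1)] card_subspace[of "vec.span B"] by (simp add: card_Diff_subset)
  have "card (\<Union>x\<in>A - vec.span B. (#) x ` F x) = (\<Sum>x\<in>A - vec.span B. card ((#) x ` F x))"
    using finite_lists_length_eq[of "UNIV :: ('a^'n) set" r]
    by (intro card_UN_disjoint) (auto simp: F_def elim!: rev_finite_subset)
  also have "\<dots> = (\<Sum>x\<in>A - vec.span B. card (F x))"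
    by (intro sum.cong refl card_image) auto
  also have "\<dots> = card (A - vec.span B)
      * (\<Prod>i<r. CARD('a) ^ vec.dim A - CARD('a) ^ (vec.dim B + Suc i))"
    using card_F by simp
  finally show ?case
    unfolding lists card_diff by (subst prod.lessThan_Suc_shift) simp
qed

lemma indep_mod_iff_span_Int:
  assumes M: "vec.subspace M" and N: "vec.subspace N" and "M \<subseteq> N"
  shows "indep_mod N L \<longleftrightarrow> indep_mod M L \<and> vec.span (M \<union> set L) \<inter> N = M"
proof -
  define X where "X = vec.span (M \<union> set L)"
  have "vec.span (N \<union> set L) = vec.span (N \<union> (M \<union> set L))"
    using \<open>M \<subseteq> N\<close> by (metis Un_absorb2 Un_assoc)
  then have "vec.span (N \<union> set L) = N + X"
    using N by (simp add: X_def span_Un_eq_set_plus[of N] vec.span_eq_iff[THEN iffD2])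
  then have "vec.dim (N \<union> set L) = vec.dim (N + X)"
    by (metis vec.dim_span)
  then have meet: "vec.dim (N \<union> set L) + vec.dim (X \<inter> N) = vec.dim N + vec.dim (M \<union> set L)"
    using dim_set_plus_Int[OF N, of X] by (simp add: X_def Int_commute)
  have sub: "M \<subseteq> X \<inter> N"
    using \<open>M \<subseteq> N\<close> vec.span_superset[of "M \<union> set L"] by (auto simp: X_def)
  moreover have "vec.subspace (X \<inter> N)"
    using N by (simp add: X_def vec.subspace_inter)
  ultimately have "vec.dim M \<le> vec.dim (X \<inter> N)" "vec.dim (X \<inter> N) = vec.dim M \<longleftrightarrow> X \<inter> N = M"
    using vec.subspace_dim_equal[OF M] vec.dim_subset by (metis order_refl)+
  then show ?thesis
    using meet dim_Un_set_le[of M L] dim_Un_set_le[of N L]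
    unfolding indep_mod_def X_def[symmetric] by linarith
qed

lemma card_subspaces_meeting_prod:
  fixes A M N :: "('a::{field,finite}^'n) set"
  assumes A: "vec.subspace A" and M: "vec.subspace M" and N: "vec.subspace N"
    and "M \<subseteq> N" "N \<subseteq> A" "vec.dim M \<le> k" "vec.dim N + (k - vec.dim M) \<le> vec.dim A"
  shows "card {U. vec.subspace U \<and> vec.dim U = k \<and> M \<subseteq> U \<and> U \<subseteq> A \<and> U \<inter> N = M}
           * (\<Prod>i<k - vec.dim M. CARD('a) ^ k - CARD('a) ^ (vec.dim M + i))
         = (\<Prod>i<k - vec.dim M. CARD('a) ^ vec.dim A - CARD('a) ^ (vec.dim N + i))"
proof -
  \<comment> \<open>Count the lists in A that are independent modulo N in two ways: together with M such a
    list spans a member of the family, and the lists giving a fixed U are those in U that are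
    independent modulo M.\<close>
  define r where "r = k - vec.dim M"
  define Lists where "Lists = {L. length L = r \<and> set L \<subseteq> A \<and> indep_mod N L}"
  define Us where "Us = {U. vec.subspace U \<and> vec.dim U = k \<and> M \<subseteq> U \<and> U \<subseteq> A \<and> U \<inter> N = M}"
  define span_with where "span_with L = vec.span (M \<union> set L)" for L
  have dim_span_with: "vec.dim (span_with L) = k" if "length L = r" "indep_mod M L" for L
    using that \<open>vec.dim M \<le> k\<close> by (simp add: span_with_def indep_mod_def r_def)
  have span_with_in: "span_with L \<in> Us" if L: "L \<in> Lists" for L
  proof -
    have "indep_mod M L" "span_with L \<inter> N = M"
      using L indep_mod_iff_span_Int[OF M N \<open>M \<subseteq> N\<close>] by (auto simp: Lists_def span_with_def)
    moreover have "span_with L \<subseteq> A"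
      unfolding span_with_def
      using L A \<open>M \<subseteq> N\<close> \<open>N \<subseteq> A\<close> by (intro vec.span_minimal) (auto simp: Lists_def)
    ultimately show ?thesis
      using L dim_span_with vec.span_superset[of "M \<union> set L"]
      by (auto simp: Us_def Lists_def span_with_def)
  qed
  have fibre: "{L \<in> Lists. span_with L = U} = {L. length L = r \<and> set L \<subseteq> U \<and> indep_mod M L}"
    if U: "U \<in> Us" for U
  proof (intro set_eqI iffI)
    fix L assume "L \<in> {L \<in> Lists. span_with L = U}"
    then show "L \<in> {L. length L = r \<and> set L \<subseteq> U \<and> indep_mod M L}"
      using indep_mod_iff_span_Int[OF M N \<open>M \<subseteq> N\<close>] vec.span_superset[of "M \<union> set L"]
      by (auto simp: Lists_def span_with_def)
  next
    fix L assume L: "L \<in> {L. length L = r \<and> set L \<subseteq> U \<and> indep_mod M L}"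
    have "span_with L \<subseteq> U"
      unfolding span_with_def using L U by (intro vec.span_minimal) (auto simp: Us_def)
    then have "span_with L = U"
      using L U dim_span_with vec.subspace_dim_equal[of "span_with L" U]
      by (auto simp: Us_def span_with_def)
    then show "L \<in> {L \<in> Lists. span_with L = U}"
      using L U indep_mod_iff_span_Int[OF M N \<open>M \<subseteq> N\<close>]
      by (auto simp: Lists_def Us_def span_with_def)
  qed
  have "finite Lists"
    using finite_lists_length_eq[of "UNIV :: ('a^'n) set" r]
    by (auto simp: Lists_def elim: rev_finite_subset)
  have "Lists = (\<Union>U\<in>Us. {L \<in> Lists. span_with L = U})"
    using span_with_in by auto
  also have "card \<dots> = (\<Sum>U\<in>Us. card {L \<in> Lists. span_with L = U})"
    using \<open>finite Lists\<close> by (intro card_UN_disjoint) auto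
  also have "\<dots> = (\<Sum>U\<in>Us. \<Prod>i<r. CARD('a) ^ k - CARD('a) ^ (vec.dim M + i))"
  proof (rule sum.cong[OF refl])
    fix U assume "U \<in> Us"
    then show "card {L \<in> Lists. span_with L = U}
        = (\<Prod>i<r. CARD('a) ^ k - CARD('a) ^ (vec.dim M + i))"
      using card_indep_mod_lists[of U M r] \<open>vec.dim M \<le> k\<close> by (simp add: fibre Us_def r_def)
  qed
  finally show ?thesis
    using card_indep_mod_lists[OF A] assms by (simp add: Lists_def Us_def r_def mult.commute)
qed

lemma of_nat_prod_power_diff:
  fixes Q :: nat
  assumes "c + r \<le> a" "Q \<ge> 1"
  shows "real (\<Prod>i<r. Q ^ a - Q ^ (c + i))
    = (\<Prod>i<r. real Q ^ (c + i)) * (\<Prod>i<r. real Q ^ (a - c - i) - 1)"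
proof -
  have "real (Q ^ a - Q ^ (c + i)) = real Q ^ (c + i) * (real Q ^ (a - c - i) - 1)" if "i < r" for i
  proof -
    have "Q ^ (c + i) \<le> Q ^ a" using assms that by (intro power_increasing) auto
    moreover have "real Q ^ a = real Q ^ (c + i) * real Q ^ (a - c - i)"
      using assms that by (simp flip: power_add)
    ultimately show ?thesis by (simp add: of_nat_diff algebra_simps)
  qed
  then show ?thesis by (simp add: prod.distrib)
qed

lemma prod_power_diff_eq_qbinom:
  fixes Q :: nat
  assumes "Q \<ge> 2" "b \<le> c" "c + r \<le> a"
  shows "real (\<Prod>i<r. Q ^ a - Q ^ (c + i))
    = real Q ^ ((c - b) * r) * qbinom (real Q) (a - c) r * real (\<Prod>i<r. Q ^ (b + r) - Q ^ (b + i))"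
proof -
  have "(\<Prod>i<r. real Q ^ (c + i)) = (\<Prod>i<r. real Q ^ (c - b) * real Q ^ (b + i))"
    using assms(2) by (intro prod.cong) (simp_all flip: power_add)
  then have "(\<Prod>i<r. real Q ^ (c + i)) = real Q ^ ((c - b) * r) * (\<Prod>i<r. real Q ^ (b + i))"
    by (simp add: prod.distrib power_mult)
  moreover have "(\<Prod>i<r. real Q ^ (b + r - b - i) - 1) = (\<Prod>i<r. real Q ^ (i + 1) - 1)"
    using prod.nat_diff_reindex[of "\<lambda>i. real Q ^ (i + 1) - 1" r]
    by (simp add: Suc_diff_Suc)
  moreover have "real Q ^ (i + 1) > 1" for i
    using assms(1) by (intro one_less_power) auto
  then have "(\<Prod>i<r. real Q ^ (i + 1) - 1) \<noteq> 0"
    by (intro less_imp_neq[symmetric] prod_pos) simp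
  then have "qbinom (real Q) (a - c) r * (\<Prod>i<r. real Q ^ (i + 1) - 1)
      = (\<Prod>i<r. real Q ^ (a - c - i) - 1)"
    unfolding qbinom_def prod_dividef by (metis nonzero_eq_divide_eq)
  ultimately show ?thesis
    using assms of_nat_prod_power_diff[of c r a Q] of_nat_prod_power_diff[of b r "b + r" Q]
    by (simp add: ac_simps)
qed

lemma card_subspaces_meeting:
  fixes A M N :: "('a::{field,finite}^'n) set"
  assumes "vec.subspace A" "vec.subspace M" "vec.subspace N"
    and "M \<subseteq> N" "N \<subseteq> A" "vec.dim M \<le> k" "vec.dim N + (k - vec.dim M) \<le> vec.dim A"
  shows "real (card {U. vec.subspace U \<and> vec.dim U = k \<and> M \<subseteq> U \<and> U \<subseteq> A \<and> U \<inter> N = M})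
     = real CARD('a) ^ ((vec.dim N - vec.dim M) * (k - vec.dim M))
       * qbinom (real CARD('a)) (vec.dim A - vec.dim N) (k - vec.dim M)"
proof -
  define m where "m = vec.dim M"
  define Q where "Q = CARD('a)"
  have "Q \<ge> 2" unfolding Q_def by (rule card_field_ge_2)
  define den where "den = (\<Prod>i<k - m. Q ^ (m + (k - m)) - Q ^ (m + i))"
  have "den > 0"
    unfolding den_def using \<open>Q \<ge> 2\<close> by (intro prod_pos) (auto intro: power_strict_increasing)
  have "m \<le> vec.dim N"
    using vec.dim_subset[OF \<open>M \<subseteq> N\<close>] by (simp add: m_def)
  define C where "C = card {U. vec.subspace U \<and> vec.dim U = k \<and> M \<subseteq> U \<and> U \<subseteq> A \<and> U \<inter> N = M}"
  have "C * den = (\<Prod>i<k - m. Q ^ vec.dim A - Q ^ (vec.dim N + i))"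
    using card_subspaces_meeting_prod[OF assms] assms(6) by (simp add: C_def den_def m_def Q_def)
  then have "real C * real den = real (\<Prod>i<k - m. Q ^ vec.dim A - Q ^ (vec.dim N + i))"
    by (simp only: flip: of_nat_mult)
  also have "\<dots> = real Q ^ ((vec.dim N - m) * (k - m))
      * qbinom (real Q) (vec.dim A - vec.dim N) (k - m) * real den"
    using prod_power_diff_eq_qbinom[of Q m "vec.dim N" "k - m" "vec.dim A"]
      assms \<open>Q \<ge> 2\<close> \<open>m \<le> vec.dim N\<close>
    unfolding den_def m_def by simp
  finally show ?thesis
    using \<open>den > 0\<close> by (simp add: C_def m_def Q_def)
qed

corollary card_subspaces_between:
  fixes A M :: "('a::{field,finite}^'n) set"
  assumes "vec.subspace A" "vec.subspace M" "M \<subseteq> A" "vec.dim M \<le> k" "k \<le> vec.dim A"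
  shows "real (card {U. vec.subspace U \<and> vec.dim U = k \<and> M \<subseteq> U \<and> U \<subseteq> A})
     = qbinom (real CARD('a)) (vec.dim A - vec.dim M) (k - vec.dim M)"
proof -
  have "{U. vec.subspace U \<and> vec.dim U = k \<and> M \<subseteq> U \<and> U \<subseteq> A \<and> U \<inter> M = M}
      = {U. vec.subspace U \<and> vec.dim U = k \<and> M \<subseteq> U \<and> U \<subseteq> A}"
    by auto
  then show ?thesis
    using card_subspaces_meeting[OF assms(1,2,2) order_refl assms(3,4)] assms(4,5) by simp
qed

section \<open>Affine subspaces as translates\<close>

lemma mem_translate_iff:
  fixes p x :: "'a::ab_group_add"
  shows "x \<in> (+) p ` W \<longleftrightarrow> x - p \<in> W"
proof
  assume "x - p \<in> W"
  then show "x \<in> (+) p ` W"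
    by (rule image_eqI[rotated]) (simp add: algebra_simps)
qed auto

lemma self_mem_translate: "vec.subspace (W :: ('a::field^'n) set) \<Longrightarrow> p \<in> (+) p ` W"
  by (simp add: mem_translate_iff vec.subspace_0)

lemma translate_eq_translate:
  assumes "vec.subspace W" "p \<in> (+) a ` W"
  shows "(+) a ` W = (+) p ` W"
proof -
  have "p - a \<in> W" using assms(2) by (simp add: mem_translate_iff)
  then have "x - a \<in> W \<longleftrightarrow> x - p \<in> W" for x
    using vec.subspace_diff[OF assms(1), of "x - a" "p - a"]
      vec.subspace_add[OF assms(1), of "x - p" "p - a"]
    by auto
  then show ?thesis by (auto simp: set_eq_iff mem_translate_iff)
qed

lemma direction_translate:
  assumes "vec.subspace W"
  shows "direction ((+) p ` W) = W"
proof
  show "direction ((+) p ` W) \<subseteq> W"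
    using vec.subspace_diff[OF assms] by (auto simp: direction_def)
  show "W \<subseteq> direction ((+) p ` W)"
  proof
    fix w assume "w \<in> W"
    then have "p + w \<in> (+) p ` W" "p \<in> (+) p ` W"
      using self_mem_translate[OF assms] by auto
    then show "w \<in> direction ((+) p ` W)"
      unfolding direction_def by force
  qed
qed

lemma aspace_translate: "vec.subspace W \<Longrightarrow> aspace (int (vec.dim W)) ((+) p ` W)"
  using self_mem_translate[of W p]
  unfolding aspace_def affine_sub_def adim_def by (auto simp: direction_translate)

lemma aspace_nonempty: "aspace (int d) A \<Longrightarrow> A \<noteq> {}"
  unfolding aspace_def by auto

lemma aspaceD:
  assumes "aspace d A" "p \<in> A"
  shows "vec.subspace (direction A) \<and> int (vec.dim (direction A)) = d \<and> A = (+) p ` direction A"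
proof -
  obtain v W where W: "vec.subspace W" "A = (+) v ` W" "adim A = d"
    using assms unfolding aspace_def affine_sub_def by auto
  have "direction A = W"
    using W direction_translate by simp
  moreover have "A = (+) p ` W"
    using W assms(2) translate_eq_translate by simp
  moreover have "adim A = int (vec.dim W)"
    using \<open>direction A = W\<close> assms(2) by (auto simp: adim_def)
  ultimately show ?thesis
    using W by simp
qed

lemma translate_subset_translateD:
  assumes "vec.subspace V" "vec.subspace W" "(+) a ` V \<subseteq> (+) b ` W"
  shows "V \<subseteq> W"
proof -
  have "(+) b ` W = (+) a ` W"
    using assms self_mem_translate[OF assms(1)] by (intro translate_eq_translate) auto
  then show ?thesis
    using assms(3) by (simp add: inj_image_subset_iff)
qed

lemma adim_translate_Int:
  assumes "vec.subspace V" "vec.subspace W" "p \<in> (+) a ` V \<inter> (+) b ` W"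
  shows "adim ((+) a ` V \<inter> (+) b ` W) = int (vec.dim (V \<inter> W))"
proof -
  have "(+) a ` V \<inter> (+) b ` W = (+) p ` (V \<inter> W)"
    using assms translate_eq_translate[of V p a] translate_eq_translate[of W p b]
    by (simp add: image_Int)
  then show ?thesis
    using assms aspace_translate[of "V \<inter> W" p] by (auto simp: aspace_def vec.subspace_inter)
qed

lemma translates_meet:
  assumes "vec.subspace V" "vec.subspace W" "b - a \<in> V + W"
  shows "(+) a ` V \<inter> (+) b ` W \<noteq> {}"
proof -
  obtain v w where "v \<in> V" "w \<in> W" "b - a = v + w"
    using assms(3) by (auto simp: set_plus_def)
  moreover have "a + v - b = - w"
    using \<open>b - a = v + w\<close> by (simp add: algebra_simps)
  ultimately have "a + v \<in> (+) a ` V \<inter> (+) b ` W"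
    using assms(2) by (simp add: mem_translate_iff vec.subspace_neg)
  then show ?thesis by blast
qed

lemma parallel_translates_disjoint:
  assumes "vec.subspace W" "(+) a ` W \<noteq> (+) b ` W"
  shows "(+) a ` W \<inter> (+) b ` W = {}"
proof (rule ccontr)
  assume "(+) a ` W \<inter> (+) b ` W \<noteq> {}"
  then obtain p where pa: "p \<in> (+) a ` W" and pb: "p \<in> (+) b ` W" by blast
  have "(+) a ` W = (+) p ` W" using translate_eq_translate[OF assms(1) pa] .
  moreover have "(+) b ` W = (+) p ` W" using translate_eq_translate[OF assms(1) pb] .
  ultimately show False using assms(2) by simp
qed

lemma aspan_translates_Un:
  assumes "vec.subspace V" "vec.subspace W"
  shows "aspan ((+) p ` V \<union> (+) p ` W) = (+) p ` (V + W)"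
proof
  have "(+) p ` V \<union> (+) p ` W \<subseteq> (+) p ` (V + W)"
    by (intro Un_least image_mono subset_set_plus_left subset_set_plus_right assms)
  then show "aspan ((+) p ` V \<union> (+) p ` W) \<subseteq> (+) p ` (V + W)"
    unfolding aspan_def affine_sub_def using subspace_set_plus[OF assms] by (intro Inter_lower) auto
next
  show "(+) p ` (V + W) \<subseteq> aspan ((+) p ` V \<union> (+) p ` W)"
    unfolding aspan_def
  proof (rule Inter_greatest)
    fix A assume "A \<in> {A. affine_sub A \<and> (+) p ` V \<union> (+) p ` W \<subseteq> A}"
    then obtain v U where U: "vec.subspace U" "A = (+) v ` U" and sub: "(+) p ` V \<union> (+) p ` W \<subseteq> A"
      unfolding affine_sub_def by auto
    have "p \<in> A" using sub self_mem_translate[OF assms(1)] by auto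
    then have A: "A = (+) p ` U" using translate_eq_translate[OF U(1)] U(2) by simp
    then have "V + W \<subseteq> U"
      using sub U(1) by (intro set_plus_least) (auto simp: inj_image_subset_iff)
    then show "(+) p ` (V + W) \<subseteq> A"
      unfolding A by (rule image_mono)
  qed
qed

lemma disjoint_not_meets_in_at_least: "A \<inter> B = {} \<Longrightarrow> \<not> meets_in_at_least (int t) A B"
  by (simp add: meets_in_at_least_def adim_def)

section \<open>Subspaces in general position\<close>

lemma ex_subspace_extension_small_meet:
  fixes E X :: "('a::field^'n) set"
  assumes E: "vec.subspace E" and X: "vec.subspace X" and "E \<subseteq> X" "vec.dim E + j \<le> CARD('n)"
  shows "\<exists>U. vec.subspace U \<and> E \<subseteq> U \<and> vec.dim U = vec.dim E + j
    \<and> vec.dim (U \<inter> X) + CARD('n) \<le> max (vec.dim E + CARD('n)) (vec.dim U + vec.dim X)"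
  using assms(4)
proof (induction j)
  case 0
  show ?case
    using E \<open>E \<subseteq> X\<close> by (intro exI[of _ E]) (auto simp: Int_absorb2)
next
  case (Suc j)
  \<comment> \<open>Extend by a vector outside U + X while U + X is not the whole space.\<close>
  then obtain U where U: "vec.subspace U" "E \<subseteq> U" "vec.dim U = vec.dim E + j"
    and meet: "vec.dim (U \<inter> X) + CARD('n) \<le> max (vec.dim E + CARD('n)) (vec.dim U + vec.dim X)"
    by auto
  have "U \<noteq> UNIV"
    using U(3) Suc.prems vec_dim_card[where 'a='a and 'n='n] by auto
  then obtain v where "v \<notin> U" and v: "v \<notin> U + X \<or> U + X = UNIV"
    using subset_set_plus_left[OF X, of U] by blast
  define U' where "U' = vec.span (insert v U)"
  have U': "vec.subspace U'" "E \<subseteq> U'" "U \<subseteq> U'" "vec.dim U' = vec.dim U + 1"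
    using U dim_span_insert[OF U(1) \<open>v \<notin> U\<close>] vec.span_superset[of "insert v U"]
    by (auto simp: U'_def)
  have "vec.dim (U' \<inter> X) + CARD('n) \<le> max (vec.dim E + CARD('n)) (vec.dim U' + vec.dim X)"
    using v
  proof
    assume "v \<notin> U + X"
    then show ?thesis
      using meet U' span_insert_Int_eq[OF U(1) X] by (simp add: U'_def)
  next
    assume "U + X = UNIV"
    then have "U' + X = UNIV"
      using set_plus_mono2[OF \<open>U \<subseteq> U'\<close> order_refl, of X] by auto
    then show ?thesis
      using dim_set_plus_Int[OF U'(1) X] vec_dim_card[where 'a='a and 'n='n] by simp
  qed
  then show ?case
    using U U' by (intro exI[of _ U']) auto
qed

lemma ex_vector_small_meet:
  fixes D V W :: "('a::field^'n) set"
  assumes D: "vec.subspace D" and V: "vec.subspace V" and W: "vec.subspace W"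
    and "D \<subset> V" "vec.dim V = vec.dim W + 1" "\<not> W \<subseteq> V" "\<not> D \<subseteq> W"
  shows "\<exists>e\<in>V. e \<notin> D \<and> vec.dim (W \<inter> vec.span (insert e D)) < vec.dim D"
proof -
  have WV: "vec.subspace (W \<inter> V)" using W V by (rule vec.subspace_inter)
  have small_WD: "vec.dim (W \<inter> D) < vec.dim D"
    using dim_less_if_psubset[OF vec.subspace_inter[OF W D] D] \<open>\<not> D \<subseteq> W\<close> by auto
  show ?thesis
  proof (cases "V \<subseteq> D + (W \<inter> V)")
    case False
    then obtain e where e: "e \<in> V" "e \<notin> D + (W \<inter> V)" by auto
    then have "e \<notin> D" using subset_set_plus_left[OF WV, of D] by auto
    have "W \<inter> vec.span (insert e D) = vec.span (insert e D) \<inter> (W \<inter> V)"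
      using span_insert_between(3)[OF D V _ e(1) \<open>e \<notin> D\<close>] \<open>D \<subset> V\<close> by auto
    also have "\<dots> = D \<inter> (W \<inter> V)"
      by (rule span_insert_Int_eq[OF D WV e(2)])
    finally have "vec.dim (W \<inter> vec.span (insert e D)) \<le> vec.dim (W \<inter> D)"
      by (intro vec.dim_subset) auto
    then show ?thesis
      using e(1) \<open>e \<notin> D\<close> small_WD by force
  next
    case True
    have "vec.dim (W \<inter> V) < vec.dim W"
      using dim_less_if_psubset[OF WV W] \<open>\<not> W \<subseteq> V\<close> by auto
    moreover have "vec.dim V \<le> vec.dim (D + (W \<inter> V))"
      using True by (rule vec.dim_subset)
    moreover have "D \<inter> (W \<inter> V) = W \<inter> D"
      using \<open>D \<subset> V\<close> by auto
    ultimately have "vec.dim (W \<inter> D) + 2 \<le> vec.dim D"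
      using dim_set_plus_Int[OF D WV] assms(5) by simp
    obtain e where e: "e \<in> V" "e \<notin> D" using \<open>D \<subset> V\<close> by auto
    define E where "E = vec.span (insert e D)"
    have E: "vec.subspace E" "D \<subseteq> E" "vec.dim E = vec.dim D + 1"
      using span_insert_between[OF D V _ e] \<open>D \<subset> V\<close> by (simp_all add: E_def)
    have "(W \<inter> E) + D \<subseteq> E"
      using E(1,2) by (intro set_plus_least) auto
    then have "vec.dim ((W \<inter> E) + D) \<le> vec.dim D + 1"
      using vec.dim_subset E(3) by metis
    moreover have "(W \<inter> E) \<inter> D = W \<inter> D"
      using E(2) by auto
    ultimately have "vec.dim (W \<inter> E) \<le> vec.dim (W \<inter> D) + 1"
      using dim_set_plus_Int[OF vec.subspace_inter[OF W E(1)] D] by simp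
    then show ?thesis
      using e \<open>vec.dim (W \<inter> D) + 2 \<le> vec.dim D\<close> by (auto simp: E_def)
  qed
qed

lemma ex_subspace_small_meet:
  fixes D V W :: "('a::field^'n) set"
  assumes D: "vec.subspace D" and V: "vec.subspace V" and W: "vec.subspace W"
    and "D \<subseteq> V" "vec.dim D = t" "vec.dim V = k + 1" "vec.dim W = k" "t < k" "2 * k - t < CARD('n)"
    and "\<not> W \<subseteq> V" "\<not> D \<subseteq> W"
  shows "\<exists>U. vec.subspace U \<and> vec.dim U = k \<and> D \<subseteq> U \<and> t + 1 \<le> vec.dim (U \<inter> V)
    \<and> vec.dim (W \<inter> U) < t"
proof -
  have "D \<subset> V" using assms(4-6,8) by auto
  then obtain e where e: "e \<in> V" "e \<notin> D" and small: "vec.dim (W \<inter> vec.span (insert e D)) < t"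
    using ex_vector_small_meet[OF D V W] assms by auto
  define E where "E = vec.span (insert e D)"
  have E: "vec.subspace E" "D \<subseteq> E" "E \<subseteq> V" "vec.dim E = t + 1"
    using span_insert_between[OF D V \<open>D \<subseteq> V\<close> e] assms(5) by (simp_all add: E_def)
  define X where "X = W + E"
  have X: "vec.subspace X" "E \<subseteq> X" "vec.dim X + vec.dim (W \<inter> E) = k + (t + 1)"
    using subspace_set_plus[OF W E(1)] subset_set_plus_right[OF W] dim_set_plus_Int[OF W E(1)]
      E(4) assms(7)
    by (auto simp: X_def)
  have room: "vec.dim E + (k - (t + 1)) \<le> CARD('n)" using E(4) assms(8,9) by linarith
  obtain U where U: "vec.subspace U" "E \<subseteq> U" "vec.dim U = k"
    and meet: "vec.dim (U \<inter> X) + CARD('n) \<le> max (t + 1 + CARD('n)) (vec.dim U + vec.dim X)"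
    using ex_subspace_extension_small_meet[OF E(1) X(1,2) room] E(4) assms(8) by auto
  have WU: "vec.subspace (W \<inter> U)" using W U(1) by (rule vec.subspace_inter)
  have "(W \<inter> U) + E \<subseteq> U \<inter> X"
    using U(2) X(2) subset_set_plus_left[OF E(1), of W]
    by (intro set_plus_least vec.subspace_inter U(1) X(1)) (auto simp: X_def)
  then have "vec.dim ((W \<inter> U) + E) \<le> vec.dim (U \<inter> X)" by (rule vec.dim_subset)
  moreover have "(W \<inter> U) \<inter> E = W \<inter> E" using U(2) by auto
  ultimately have "vec.dim (W \<inter> U) + (t + 1) \<le> vec.dim (U \<inter> X) + vec.dim (W \<inter> E)"
    using dim_set_plus_Int[OF WU E(1)] E(4) by simp
  then have "vec.dim (W \<inter> U) < t"
    using meet X(3) small U(3) assms(8,9) by (simp add: E_def max_def split: if_splits)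
  moreover have "vec.dim E \<le> vec.dim (U \<inter> V)"
    using U(2) E(3) by (intro vec.dim_subset) auto
  ultimately show ?thesis
    using U E by auto
qed

lemma translate_Int_span_insert_eq_empty:
  assumes W: "vec.subspace W" and D: "vec.subspace D" and "D \<subseteq> W" "c \<notin> W"
    and "e \<notin> vec.span (insert c W)"
  shows "(+) c ` W \<inter> vec.span (insert e D) = {}"
proof (rule ccontr)
  assume "(+) c ` W \<inter> vec.span (insert e D) \<noteq> {}"
  then obtain w l where w: "w \<in> W" "c + w - l *s e \<in> D"
    using mem_span_insert_iff[OF D] by auto
  then have "w - (c + w - l *s e) \<in> W"
    using \<open>D \<subseteq> W\<close> vec.subspace_diff[OF W] by blast
  then have le_c: "l *s e - c \<in> W"
    by (simp add: algebra_simps)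
  show False
  proof (cases "l = 0")
    case True
    then show False
      using le_c \<open>c \<notin> W\<close> vec.subspace_neg[OF W] by fastforce
  next
    case False
    have "c + (l *s e - c) \<in> vec.span (insert c W)"
      using le_c vec.span_superset[of "insert c W"] vec.span_add by blast
    then have "l *s e \<in> vec.span (insert c W)" by simp
    from vec.span_scale[OF this, of "inverse l"] show False
      using False assms(5) by simp
  qed
qed

lemma ex_subspace_avoiding_translate:
  fixes D V W :: "('a::field^'n) set"
  assumes D: "vec.subspace D" and V: "vec.subspace V" and W: "vec.subspace W"
    and "D \<subseteq> V" "D \<subseteq> W" "vec.dim D = t" "vec.dim V = k + 1" "vec.dim W = k" "t < k"
    and "2 * k - t < CARD('n)" "\<not> W \<subseteq> V" "c \<notin> W"
  shows "\<exists>U. vec.subspace U \<and> vec.dim U = k \<and> D \<subseteq> U \<and> t + 1 \<le> vec.dim (U \<inter> V)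
    \<and> (+) c ` W \<inter> U = {}"
proof -
  \<comment> \<open>E is spanned by D and a vector of V outside the span Y of c and W; a general position
    extension U of E meets the span X of c, W and E only in E, which misses c + W.\<close>
  define Y where "Y = vec.span (insert c W)"
  have "W \<subseteq> Y" "vec.dim Y = k + 1"
    using dim_span_insert[OF W \<open>c \<notin> W\<close>] vec.span_superset[of "insert c W"] assms(8)
    by (auto simp: Y_def)
  then have "\<not> V \<subseteq> Y"
    using vec.subspace_dim_equal[OF V, of Y] \<open>\<not> W \<subseteq> V\<close> assms(7) by (auto simp: Y_def)
  then obtain e where e: "e \<in> V" "e \<notin> Y" by auto
  then have "e \<notin> D" using \<open>D \<subseteq> W\<close> \<open>W \<subseteq> Y\<close> by auto
  define E where "E = vec.span (insert e D)"
  have E: "vec.subspace E" "D \<subseteq> E" "E \<subseteq> V" "vec.dim E = t + 1"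
    using span_insert_between[OF D V \<open>D \<subseteq> V\<close> e(1) \<open>e \<notin> D\<close>] assms(6) by (simp_all add: E_def)
  have "vec.dim (W + E) + vec.dim (W \<inter> E) = k + (t + 1)"
    using dim_set_plus_Int[OF W E(1)] E(4) assms(8) by simp
  moreover have "t \<le> vec.dim (W \<inter> E)"
    using vec.dim_subset[of D "W \<inter> E"] \<open>D \<subseteq> W\<close> E(2) assms(6) by auto
  ultimately have dim_WE: "vec.dim (W + E) \<le> k + 1" by simp
  define X where "X = vec.span (insert c (W + E))"
  have X: "vec.subspace X" "W \<subseteq> X" "E \<subseteq> X" "c \<in> X" "vec.dim X \<le> k + 2"
    using vec.span_superset[of "insert c (W + E)"] subset_set_plus_left[OF E(1), of W]
      subset_set_plus_right[OF W, of E] dim_WE vec.dim_insert[of c "W + E"]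
    by (auto simp: X_def split: if_splits)
  have room: "vec.dim E + (k - (t + 1)) \<le> CARD('n)" using E(4) assms(9,10) by linarith
  obtain U where U: "vec.subspace U" "E \<subseteq> U" "vec.dim U = k"
    and meet: "vec.dim (U \<inter> X) + CARD('n) \<le> max (t + 1 + CARD('n)) (vec.dim U + vec.dim X)"
    using ex_subspace_extension_small_meet[OF E(1) X(1,3) room] E(4) assms(9) by auto
  have "vec.dim (U \<inter> X) \<le> vec.dim E"
    using meet U(3) X(5) E(4) assms(9,10) by (simp add: max_def split: if_splits)
  then have "U \<inter> X = E"
    using vec.subspace_dim_equal[OF E(1) vec.subspace_inter[OF U(1) X(1)]] U(2) X(3) by auto
  moreover have "(+) c ` W \<subseteq> X"
    using X(2,4) vec.subspace_add[OF X(1)] by auto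
  ultimately have "(+) c ` W \<inter> U \<subseteq> (+) c ` W \<inter> E"
    by blast
  also have "\<dots> = {}"
    unfolding E_def Y_def[symmetric]
    using translate_Int_span_insert_eq_empty[OF W D \<open>D \<subseteq> W\<close> \<open>c \<notin> W\<close>] e(2) by (simp add: Y_def)
  finally have "(+) c ` W \<inter> U = {}" by blast
  moreover have "vec.dim E \<le> vec.dim (U \<inter> V)"
    using U(2) E(3) by (intro vec.dim_subset) auto
  ultimately show ?thesis
    using U E by (intro exI[of _ U]) auto
qed

section \<open>The construction\<close>

locale t_intersecting_construction =
  fixes \<pi> \<delta> :: "('a::{field,finite} ^ 'n) set" and S1 :: "('a ^ 'n) set set" and k t :: nat
  assumes t_less_k: "t < k"
    and dim_large: "CARD('n) > 2 * k - t"
    and aspace_delta: "aspace (int t) \<delta>"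
    and aspace_pi: "aspace (int k) \<pi>"
    and aspace_meet: "aspace (int t - 1) (\<pi> \<inter> \<delta>)"
    and S1_sub: "\<forall>A\<in>S1. aspace (int k) A \<and> A \<subseteq> aspan (\<pi> \<union> \<delta>)"
    and pi_in_S1: "\<pi> \<in> S1"
    and S1_directions_distinct: "\<forall>A\<in>S1. \<forall>B\<in>S1. A \<noteq> B \<longrightarrow> direction A \<noteq> direction B"
    and S1_avoids_delta: "\<forall>A\<in>S1. \<not> direction \<delta> \<subseteq> direction A"
    and S1_maximal: "\<forall>C. aspace (int k) C \<and> C \<subseteq> aspan (\<pi> \<union> \<delta>) \<and> C \<notin> S1 \<longrightarrow>
        \<not> ((\<forall>A\<in>insert C S1. \<forall>B\<in>insert C S1. A \<noteq> B \<longrightarrow> direction A \<noteq> direction B)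
           \<and> (\<forall>A\<in>insert C S1. \<not> direction \<delta> \<subseteq> direction A))"
begin

definition P :: "('a ^ 'n) set" where "P = direction \<pi>"
definition D :: "('a ^ 'n) set" where "D = direction \<delta>"

definition V :: "('a ^ 'n) set" where "V = P + D"

definition origin :: "'a ^ 'n" where "origin = (SOME p. p \<in> \<pi> \<inter> \<delta>)"

definition S2 :: "('a ^ 'n) set set" where
  "S2 = {A. aspace (int k) A \<and> \<delta> \<subseteq> A \<and> meets_in_at_least (int t + 1) A (aspan (\<pi> \<union> \<delta>))}"

lemma t_pos: "0 < t"
proof (rule ccontr)
  assume "\<not> 0 < t"
  obtain p where "p \<in> \<delta>" using aspace_nonempty[OF aspace_delta] by blast
  then have "vec.dim (direction \<delta>) = 0"
    using aspaceD[OF aspace_delta] \<open>\<not> 0 < t\<close> by simp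
  moreover obtain x where "x \<in> \<pi>" using aspace_nonempty[OF aspace_pi] by blast
  then have "0 \<in> direction \<pi>" unfolding direction_def by force
  ultimately show False
    using S1_avoids_delta pi_in_S1 by auto
qed

lemma origin_in: "origin \<in> \<pi> \<inter> \<delta>"
proof -
  have "aspace (int (t - 1)) (\<pi> \<inter> \<delta>)"
    using aspace_meet t_pos by (simp add: of_nat_diff)
  then show ?thesis
    unfolding origin_def using aspace_nonempty by (metis someI_ex ex_in_conv)
qed

lemma pi_translate: "vec.subspace P" "vec.dim P = k" "\<pi> = (+) origin ` P"
  using aspaceD[OF aspace_pi, of origin] origin_in by (auto simp: P_def)

lemma delta_translate: "vec.subspace D" "vec.dim D = t" "\<delta> = (+) origin ` D"
  using aspaceD[OF aspace_delta, of origin] origin_in by (auto simp: D_def)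

lemma dim_P_Int_D: "vec.dim (P \<inter> D) = t - 1"
proof -
  have "adim (\<pi> \<inter> \<delta>) = int t - 1"
    using aspace_meet origin_in unfolding aspace_def by auto
  moreover have "adim (\<pi> \<inter> \<delta>) = int (vec.dim (P \<inter> D))"
    using origin_in adim_translate_Int[OF pi_translate(1) delta_translate(1), of origin origin origin]
    by (simp flip: pi_translate(3) delta_translate(3))
  ultimately show ?thesis by simp
qed

lemma subspace_V: "vec.subspace V"
  and P_subset_V: "P \<subseteq> V"
  and D_subset_V: "D \<subseteq> V"
  and dim_V: "vec.dim V = k + 1"
  using subspace_set_plus[OF pi_translate(1) delta_translate(1)]
    subset_set_plus_left[OF delta_translate(1)] subset_set_plus_right[OF pi_translate(1)]
    dim_set_plus_Int[OF pi_translate(1) delta_translate(1)] pi_translate(2) delta_translate(2)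
    dim_P_Int_D t_pos
  by (auto simp: V_def)

lemma aspan_eq: "aspan (\<pi> \<union> \<delta>) = (+) origin ` V"
  using aspan_translates_Un[OF pi_translate(1) delta_translate(1), of origin]
  by (simp add: V_def flip: pi_translate(3) delta_translate(3))

lemma S1_translate:
  assumes "A \<in> S1" "a \<in> A"
  shows "vec.subspace (direction A)" "vec.dim (direction A) = k" "A = (+) a ` direction A"
    and "direction A \<subseteq> V" "a - origin \<in> V"
proof -
  show A: "vec.subspace (direction A)" "vec.dim (direction A) = k" "A = (+) a ` direction A"
    using aspaceD[of k A a] S1_sub assms by auto
  have "A \<subseteq> (+) origin ` V"
    using S1_sub assms(1) aspan_eq by auto
  then show "direction A \<subseteq> V"
    using translate_subset_translateD[OF A(1) subspace_V] A(3) by metis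
  show "a - origin \<in> V"
    using \<open>A \<subseteq> (+) origin ` V\<close> assms(2) by (auto simp: mem_translate_iff)
qed

definition S1_dirs :: "('a ^ 'n) set set" where
  "S1_dirs = {W. vec.subspace W \<and> vec.dim W = k \<and> W \<subseteq> V \<and> \<not> D \<subseteq> W}"

lemma directions_S1: "direction ` S1 = S1_dirs"
proof
  show "direction ` S1 \<subseteq> S1_dirs"
  proof
    fix W assume "W \<in> direction ` S1"
    then obtain A where A: "A \<in> S1" "W = direction A" by auto
    then obtain a where "a \<in> A" using S1_sub aspace_nonempty by blast
    then show "W \<in> S1_dirs"
      using S1_translate[OF A(1) \<open>a \<in> A\<close>] S1_avoids_delta A by (simp add: S1_dirs_def D_def)
  qed
next
  show "S1_dirs \<subseteq> direction ` S1"
  proof (rule ccontr)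
    assume "\<not> S1_dirs \<subseteq> direction ` S1"
    then obtain W where W: "W \<in> S1_dirs" "W \<notin> direction ` S1" by blast
    define C where "C = (+) origin ` W"
    have "direction C = W"
      using W(1) direction_translate[of W origin] by (simp add: C_def S1_dirs_def)
    have other_dirs: "direction B \<noteq> W" if "B \<in> S1" for B
      using W(2) that by blast
    then have "C \<notin> S1" using \<open>direction C = W\<close> by blast
    moreover have "aspace (int k) C" "C \<subseteq> aspan (\<pi> \<union> \<delta>)"
      using W(1) aspace_translate aspan_eq by (auto simp: C_def S1_dirs_def)
    moreover have "\<forall>A\<in>insert C S1. \<forall>B\<in>insert C S1. A \<noteq> B \<longrightarrow> direction A \<noteq> direction B"
      using S1_directions_distinct other_dirs \<open>direction C = W\<close> by auto
    moreover have "\<forall>A\<in>insert C S1. \<not> direction \<delta> \<subseteq> direction A"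
      using S1_avoids_delta W(1) \<open>direction C = W\<close> by (simp add: S1_dirs_def D_def)
    ultimately show False
      using S1_maximal[rule_format, of C] by simp
  qed
qed

lemma adim_translate_Int_aspan:
  "vec.subspace U \<Longrightarrow> adim ((+) origin ` U \<inter> aspan (\<pi> \<union> \<delta>)) = int (vec.dim (U \<inter> V))"
  using adim_translate_Int[OF _ subspace_V, of U origin origin origin]
    self_mem_translate[of U origin] self_mem_translate[OF subspace_V, of origin]
  by (simp add: aspan_eq)

definition S2_dirs :: "('a ^ 'n) set set" where
  "S2_dirs = {U. vec.subspace U \<and> vec.dim U = k \<and> D \<subseteq> U \<and> U \<inter> V \<noteq> D}"

lemma S2_eq: "S2 = (\<lambda>U. (+) origin ` U) ` S2_dirs"
proof
  show "S2 \<subseteq> (\<lambda>U. (+) origin ` U) ` S2_dirs"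
  proof
    fix A assume A: "A \<in> S2"
    define U where "U = direction A"
    have "aspace (int k) A" "origin \<in> A"
      using A origin_in by (auto simp: S2_def)
    from aspaceD[OF this]
    have U: "vec.subspace U" "vec.dim U = k" "A = (+) origin ` U"
      by (auto simp: U_def)
    have "(+) origin ` D \<subseteq> (+) origin ` U"
      using A U(3) by (simp add: S2_def flip: delta_translate(3))
    then have "D \<subseteq> U" by (simp add: inj_image_subset_iff)
    moreover have "adim (A \<inter> aspan (\<pi> \<union> \<delta>)) = int (vec.dim (U \<inter> V))"
      using adim_translate_Int_aspan[OF U(1)] U(3) by simp
    ultimately show "A \<in> (\<lambda>U. (+) origin ` U) ` S2_dirs"
      using A U delta_translate(2) by (auto simp: S2_def S2_dirs_def meets_in_at_least_def)
  qed
  show "(\<lambda>U. (+) origin ` U) ` S2_dirs \<subseteq> S2"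
  proof
    fix A assume "A \<in> (\<lambda>U. (+) origin ` U) ` S2_dirs"
    then obtain U where U: "U \<in> S2_dirs" "A = (+) origin ` U" by auto
    then have Us: "vec.subspace U" "vec.dim U = k" "D \<subseteq> U" "U \<inter> V \<noteq> D"
      by (auto simp: S2_dirs_def)
    have "D \<subset> U \<inter> V" using Us D_subset_V by auto
    then have "vec.dim D < vec.dim (U \<inter> V)"
      using delta_translate(1) vec.subspace_inter[OF Us(1) subspace_V]
      by (intro dim_less_if_psubset)
    moreover have "adim (A \<inter> aspan (\<pi> \<union> \<delta>)) = int (vec.dim (U \<inter> V))"
      using adim_translate_Int_aspan[OF Us(1)] U(2) by simp
    moreover have "(+) origin ` D \<subseteq> A"
      using Us(3) U(2) by (simp add: image_mono)
    then have "\<delta> \<subseteq> A" by (simp flip: delta_translate(3))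
    ultimately show "A \<in> S2"
      using aspace_translate[OF Us(1), of origin] Us(2) U(2) delta_translate(2)
      by (simp add: S2_def meets_in_at_least_def)
  qed
qed

lemma card_S1: "real (card S1) = theta (real CARD('a)) k - theta (real CARD('a)) (k - t)"
proof -
  define q where "q = real CARD('a)"
  have "q > 1" using card_field_ge_2[where 'a='a] by (simp add: q_def)
  define Hyps where "Hyps M = {W. vec.subspace W \<and> vec.dim W = k \<and> M \<subseteq> W \<and> W \<subseteq> V}" for M
  have "real (card (Hyps {0})) = theta q k"
    using card_subspaces_between[OF subspace_V vec.subspace_single_0, of k] dim_V
      qbinom_Suc_self[OF \<open>q > 1\<close>] vec.subspace_0[OF subspace_V]
    by (simp add: Hyps_def q_def)
  moreover have "real (card (Hyps D)) = theta q (k - t)"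
    using card_subspaces_between[OF subspace_V delta_translate(1) D_subset_V, of k] dim_V
      delta_translate(2) t_less_k qbinom_Suc_self[OF \<open>q > 1\<close>, of "k - t"]
    by (simp add: Hyps_def q_def Suc_diff_le)
  moreover have "S1_dirs = Hyps {0} - Hyps D" "Hyps D \<subseteq> Hyps {0}"
    using vec.subspace_0 by (auto simp: S1_dirs_def Hyps_def)
  moreover have "inj_on direction S1"
    using S1_directions_distinct by (auto simp: inj_on_def)
  then have "card S1 = card S1_dirs"
    using card_image directions_S1 by fastforce
  ultimately show ?thesis
    by (simp add: card_Diff_subset card_mono of_nat_diff q_def)
qed

lemma card_S2:
  "real (card S2) = qbinom (real CARD('a)) (CARD('n) - t) (k - t)
     - real CARD('a) ^ ((k - t + 1) * (k - t)) * qbinom (real CARD('a)) (CARD('n) - k - 1) (k - t)"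
proof -
  define Ext where "Ext = {U. vec.subspace U \<and> vec.dim U = k \<and> D \<subseteq> U \<and> U \<subseteq> UNIV}"
  define Ext_meet where
    "Ext_meet = {U. vec.subspace U \<and> vec.dim U = k \<and> D \<subseteq> U \<and> U \<subseteq> UNIV \<and> U \<inter> V = D}"
  have "k \<le> CARD('n)" "vec.dim V + (k - t) \<le> CARD('n)"
    using dim_large t_less_k dim_V by linarith+
  then have "real (card Ext) = qbinom (real CARD('a)) (CARD('n) - t) (k - t)"
    using card_subspaces_between[OF vec.subspace_UNIV delta_translate(1) subset_UNIV, of k]
      delta_translate(2) t_less_k by (simp add: Ext_def card_cart_basis)
  moreover have "real (card Ext_meet)
      = real CARD('a) ^ ((k - t + 1) * (k - t)) * qbinom (real CARD('a)) (CARD('n) - k - 1) (k - t)"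
    using card_subspaces_meeting[OF vec.subspace_UNIV delta_translate(1) subspace_V D_subset_V
        subset_UNIV, of k]
      \<open>vec.dim V + (k - t) \<le> CARD('n)\<close> delta_translate(2) dim_V t_less_k
    by (simp add: Ext_meet_def card_cart_basis Suc_diff_le)
  moreover have "S2_dirs = Ext - Ext_meet" "Ext_meet \<subseteq> Ext"
    by (auto simp: S2_dirs_def Ext_def Ext_meet_def)
  moreover have "card S2 = card S2_dirs"
    unfolding S2_eq by (rule card_image) (simp add: inj_on_def inj_image_eq_iff)
  ultimately show ?thesis
    by (simp add: card_Diff_subset card_mono of_nat_diff)
qed

lemma S1_S2_disjoint: "S1 \<inter> S2 = {}"
proof -
  have "\<not> D \<subseteq> direction A" if "A \<in> S1" for A
    using S1_avoids_delta that by (simp add: D_def)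
  moreover have "D \<subseteq> direction A" if "A \<in> S2" for A
    using that direction_translate by (auto simp: S2_eq S2_dirs_def)
  ultimately show ?thesis by blast
qed

lemma S1_pairwise_meet:
  assumes "A \<in> S1" "B \<in> S1" "A \<noteq> B"
  shows "meets_in_at_least (int t) A B"
proof -
  obtain a b where "a \<in> A" "b \<in> B"
    using assms S1_sub aspace_nonempty by (metis ex_in_conv)
  define W1 W2 where "W1 = direction A" and "W2 = direction B"
  have A: "vec.subspace W1" "vec.dim W1 = k" "A = (+) a ` W1" "W1 \<subseteq> V" "a - origin \<in> V"
    using S1_translate[OF assms(1) \<open>a \<in> A\<close>] by (simp_all add: W1_def)
  have B: "vec.subspace W2" "vec.dim W2 = k" "B = (+) b ` W2" "W2 \<subseteq> V" "b - origin \<in> V"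
    using S1_translate[OF assms(2) \<open>b \<in> B\<close>] by (simp_all add: W2_def)
  have "W1 \<noteq> W2"
    using S1_directions_distinct assms by (simp add: W1_def W2_def)
  then have "\<not> W2 \<subseteq> W1"
    using vec.subspace_dim_equal[OF B(1) A(1)] A(2) B(2) by auto
  then have sum: "W1 + W2 = V"
    using set_plus_eq_if_codim_1[OF A(1) B(1) subspace_V A(4) B(4)] dim_V A(2) by simp
  have "b - a \<in> V"
    using vec.subspace_diff[OF subspace_V B(5) A(5)] by simp
  then obtain p where "p \<in> A \<inter> B"
    using translates_meet[OF A(1) B(1)] sum A(3) B(3) by blast
  then have "adim (A \<inter> B) = int (vec.dim (W1 \<inter> W2))"
    using adim_translate_Int[OF A(1) B(1)] A(3) B(3) by simp
  moreover have "vec.dim (W1 \<inter> W2) + (k + 1) = k + k"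
    using dim_set_plus_Int[OF A(1) B(1)] sum dim_V A(2) B(2) by simp
  ultimately show ?thesis
    using t_less_k by (simp add: meets_in_at_least_def)
qed

lemma S1_S2_meet:
  assumes "A \<in> S1" "B \<in> S2"
  shows "meets_in_at_least (int t) A B"
proof -
  obtain a where "a \<in> A"
    using assms S1_sub aspace_nonempty by (metis ex_in_conv)
  define W where "W = direction A"
  have A: "vec.subspace W" "vec.dim W = k" "A = (+) a ` W" "W \<subseteq> V" "a - origin \<in> V"
    using S1_translate[OF assms(1) \<open>a \<in> A\<close>] by (simp_all add: W_def)
  obtain U where "U \<in> S2_dirs" and B: "B = (+) origin ` U"
    using assms(2) S2_eq by auto
  then have U: "vec.subspace U" "D \<subset> U \<inter> V"
    using D_subset_V by (auto simp: S2_dirs_def)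
  define X where "X = U \<inter> V"
  have X: "vec.subspace X" "t + 1 \<le> vec.dim X"
    using dim_less_if_psubset[OF delta_translate(1) _ U(2)] vec.subspace_inter[OF U(1) subspace_V]
      delta_translate(2)
    by (auto simp: X_def)
  have "\<not> D \<subseteq> W"
    using S1_avoids_delta assms(1) by (simp add: D_def W_def)
  then have "\<not> X \<subseteq> W"
    using U(2) by (auto simp: X_def)
  then have sum: "W + X = V"
    using set_plus_eq_if_codim_1[OF A(1) X(1) subspace_V A(4)] dim_V A(2) by (auto simp: X_def)
  have "origin - a \<in> V"
    using vec.subspace_neg[OF subspace_V A(5)] by simp
  then have "origin - a \<in> W + U"
    using sum set_plus_mono2[of W W X U] by (auto simp: X_def)
  then obtain p where "p \<in> A \<inter> B"
    using translates_meet[OF A(1) U(1)] A(3) B by blast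
  then have "adim (A \<inter> B) = int (vec.dim (W \<inter> U))"
    using adim_translate_Int[OF A(1) U(1)] A(3) B by simp
  moreover have "vec.dim (W \<inter> X) \<le> vec.dim (W \<inter> U)"
    by (rule vec.dim_subset) (auto simp: X_def)
  moreover have "vec.dim (W \<inter> X) + (k + 1) = k + vec.dim X"
    using dim_set_plus_Int[OF A(1) X(1)] sum dim_V A(2) by simp
  ultimately show ?thesis
    using X(2) by (simp add: meets_in_at_least_def)
qed

lemma S2_pairwise_meet:
  assumes "A \<in> S2" "B \<in> S2"
  shows "meets_in_at_least (int t) A B"
proof -
  obtain U1 U2 where U: "U1 \<in> S2_dirs" "U2 \<in> S2_dirs" "A = (+) origin ` U1" "B = (+) origin ` U2"
    using assms S2_eq by auto
  then have "adim (A \<inter> B) = int (vec.dim (U1 \<inter> U2))"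
    using adim_translate_Int[of U1 U2 origin origin origin] self_mem_translate[of U1 origin]
      self_mem_translate[of U2 origin]
    by (auto simp: S2_dirs_def)
  moreover have "vec.dim D \<le> vec.dim (U1 \<inter> U2)"
    using U by (intro vec.dim_subset) (auto simp: S2_dirs_def)
  ultimately show ?thesis
    using delta_translate(2) by (simp add: meets_in_at_least_def)
qed

lemma pairwise_meet:
  assumes "A \<in> S1 \<union> S2" "B \<in> S1 \<union> S2" "A \<noteq> B"
  shows "meets_in_at_least (int t) A B"
  using assms S1_pairwise_meet S1_S2_meet S2_pairwise_meet
  by (metis Int_commute Un_iff meets_in_at_least_def)

lemma translate_in_S2:
  assumes "vec.subspace U" "vec.dim U = k" "D \<subseteq> U" "t + 1 \<le> vec.dim (U \<inter> V)"
  shows "(+) origin ` U \<in> S2"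
proof -
  have "U \<inter> V \<noteq> D" using assms(4) delta_translate(2) by auto
  then show ?thesis using assms by (auto simp: S2_eq S2_dirs_def)
qed

lemma disjoint_member_if_inside:
  assumes "aspace (int k) C" "C \<subseteq> aspan (\<pi> \<union> \<delta>)" "C \<notin> S1 \<union> S2"
  shows "\<exists>A\<in>S1 \<union> S2. C \<inter> A = {}"
proof -
  obtain c where "c \<in> C" using aspace_nonempty[OF assms(1)] by blast
  define W where "W = direction C"
  have W: "vec.subspace W" "vec.dim W = k" "C = (+) c ` W"
    using aspaceD[OF assms(1) \<open>c \<in> C\<close>] by (simp_all add: W_def)
  have "W \<subseteq> V"
    using translate_subset_translateD[OF W(1) subspace_V] assms(2) W(3) aspan_eq by simp
  show ?thesis
  proof (cases "D \<subseteq> W")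
    case False
    then have "W \<in> direction ` S1"
      using W \<open>W \<subseteq> V\<close> directions_S1 by (simp add: S1_dirs_def)
    then obtain A a where "A \<in> S1" "a \<in> A" "W = direction A"
      using S1_sub aspace_nonempty by (metis ex_in_conv imageE)
    then have "A = (+) a ` W" "A \<noteq> C"
      using S1_translate(3) assms(3) by auto
    then show ?thesis
      using parallel_translates_disjoint[OF W(1)] W(3) \<open>A \<in> S1\<close> by blast
  next
    case True
    have "vec.dim (W \<inter> V) = k" using \<open>W \<subseteq> V\<close> W(2) by (simp add: Int_absorb2)
    then have B: "(+) origin ` W \<in> S2"
      using translate_in_S2[OF W(1,2) True] t_less_k by simp
    then have "(+) origin ` W \<noteq> C" using assms(3) by auto
    then show ?thesis
      using parallel_translates_disjoint[OF W(1)] W(3) B by blast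
  qed
qed

lemma far_from_pi_if_contains_delta:
  assumes "aspace (int k) C" "\<delta> \<subseteq> C" "C \<notin> S2"
  shows "\<not> meets_in_at_least (int t) C \<pi>"
proof -
  define W where "W = direction C"
  have "origin \<in> C" using assms(2) origin_in by auto
  then have W: "vec.subspace W" "vec.dim W = k" "C = (+) origin ` W"
    using aspaceD[OF assms(1)] by (simp_all add: W_def)
  have "(+) origin ` D \<subseteq> (+) origin ` W"
    using assms(2) W(3) by (simp flip: delta_translate(3))
  then have "D \<subseteq> W \<inter> V" using D_subset_V by (auto simp: inj_image_subset_iff)
  moreover have "\<not> t + 1 \<le> vec.dim (W \<inter> V)"
    using translate_in_S2[OF W(1,2)] \<open>D \<subseteq> W \<inter> V\<close> assms(3) W(3) by auto
  ultimately have "W \<inter> V = D"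
    using vec.subspace_dim_equal[OF delta_translate(1) vec.subspace_inter[OF W(1) subspace_V]]
      delta_translate(2)
    by simp
  then have "vec.dim (W \<inter> P) \<le> vec.dim (P \<inter> D)"
    using P_subset_V by (intro vec.dim_subset) auto
  moreover have "adim (C \<inter> \<pi>) = int (vec.dim (W \<inter> P))"
    using adim_translate_Int[OF W(1) pi_translate(1), of origin origin origin] W(3)
      self_mem_translate[OF W(1)] origin_in
    by (simp flip: pi_translate(3))
  ultimately show ?thesis
    using dim_P_Int_D t_pos by (simp add: meets_in_at_least_def)
qed

lemma far_member_if_crossing:
  assumes "aspace (int k) C" "c \<in> C" "c \<in> aspan (\<pi> \<union> \<delta>)" "\<not> C \<subseteq> aspan (\<pi> \<union> \<delta>)" "C \<notin> S2"
  shows "\<exists>A\<in>S1 \<union> S2. \<not> meets_in_at_least (int t) C A"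
proof -
  define W where "W = direction C"
  have W: "vec.subspace W" "vec.dim W = k" "C = (+) c ` W"
    using aspaceD[OF assms(1,2)] by (simp_all add: W_def)
  define c' where "c' = c - origin"
  have "c' \<in> V" using assms(3) aspan_eq by (simp add: c'_def mem_translate_iff)
  have "(+) origin ` V = (+) c ` V"
    using translate_eq_translate[OF subspace_V] assms(3) aspan_eq by simp
  then have "\<not> W \<subseteq> V"
    using assms(4) W(3) aspan_eq by (auto simp: inj_image_subset_iff)
  have room: "2 * k - t < CARD('n)" using dim_large by simp
  consider "D \<subseteq> W" "c' \<in> W" | "\<not> D \<subseteq> W" | "D \<subseteq> W" "c' \<notin> W" by blast
  then show ?thesis
  proof cases
    case 1
    then have "origin \<in> C"
      using W vec.subspace_neg[OF W(1) \<open>c' \<in> W\<close>] by (simp add: c'_def mem_translate_iff)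
    then have "C = (+) origin ` W"
      using translate_eq_translate[OF W(1)] W(3) by simp
    moreover have "(+) origin ` D \<subseteq> (+) origin ` W"
      using \<open>D \<subseteq> W\<close> by (rule image_mono)
    ultimately have "\<delta> \<subseteq> C"
      by (simp flip: delta_translate(3))
    then show ?thesis
      using far_from_pi_if_contains_delta assms(1,5) pi_in_S1 by blast
  next
    case 2
    obtain U where U: "vec.subspace U" "vec.dim U = k" "D \<subseteq> U" "t + 1 \<le> vec.dim (U \<inter> V)"
      and small: "vec.dim (W \<inter> U) < t"
      using ex_subspace_small_meet[OF delta_translate(1) subspace_V W(1) D_subset_V
          delta_translate(2) dim_V W(2) t_less_k room \<open>\<not> W \<subseteq> V\<close> 2]
      by blast
    have "adim (C \<inter> (+) origin ` U) < int t"
    proof (cases "C \<inter> (+) origin ` U = {}")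
      case False
      then obtain p where "p \<in> C \<inter> (+) origin ` U" by blast
      then show ?thesis
        using adim_translate_Int[OF W(1) U(1)] W(3) small by simp
    qed (simp add: adim_def)
    then show ?thesis
      using translate_in_S2[OF U(1-4)]
      by (intro bexI[of _ "(+) origin ` U"]) (auto simp: meets_in_at_least_def)
  next
    case 3
    obtain U where U: "vec.subspace U" "vec.dim U = k" "D \<subseteq> U" "t + 1 \<le> vec.dim (U \<inter> V)"
      and avoid: "(+) c' ` W \<inter> U = {}"
      using ex_subspace_avoiding_translate[OF delta_translate(1) subspace_V W(1) D_subset_V 3(1)
          delta_translate(2) dim_V W(2) t_less_k room \<open>\<not> W \<subseteq> V\<close> 3(2)]
      by blast
    have "C \<inter> (+) origin ` U = {}"
    proof (rule ccontr)
      assume "C \<inter> (+) origin ` U \<noteq> {}"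
      then obtain x where "x \<in> (+) c ` W" "x \<in> (+) origin ` U"
        using W(3) by blast
      then have "x - c \<in> W" "x - origin \<in> U"
        by (simp_all add: mem_translate_iff)
      moreover have "x - origin = c' + (x - c)" by (simp add: c'_def)
      ultimately show False using avoid by blast
    qed
    then show ?thesis
      using translate_in_S2[OF U(1-4)] disjoint_not_meets_in_at_least by blast
  qed
qed

lemma exists_member_not_meeting:
  assumes "aspace (int k) C" "C \<notin> S1 \<union> S2"
  shows "\<exists>A\<in>S1 \<union> S2. \<not> meets_in_at_least (int t) C A"
proof -
  consider "C \<subseteq> aspan (\<pi> \<union> \<delta>)" | "C \<inter> aspan (\<pi> \<union> \<delta>) = {}"
    | c where "c \<in> C" "c \<in> aspan (\<pi> \<union> \<delta>)" "\<not> C \<subseteq> aspan (\<pi> \<union> \<delta>)"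
    by blast
  then show ?thesis
  proof cases
    case 1
    then show ?thesis
      using disjoint_member_if_inside[OF assms(1) 1 assms(2)] disjoint_not_meets_in_at_least
      by blast
  next
    case 2
    then have "C \<inter> \<pi> = {}" using aspan_def by blast
    then show ?thesis
      using pi_in_S1 disjoint_not_meets_in_at_least by blast
  next
    case 3
    then show ?thesis
      using far_member_if_crossing assms by blast
  qed
qed

theorem maximal_t_intersecting_S1_S2: "maximal_t_intersecting k t (S1 \<union> S2)"
  unfolding maximal_t_intersecting_def
  using S1_sub exists_member_not_meeting pairwise_meet by (auto simp: S2_def)

end

theorem mainTheorem6:
  fixes \<pi> \<delta> :: "(('a::{field,finite}) ^ 'n) set"
    and S1 :: "('a ^ 'n) set set"
    and k t :: nat
  assumes "t < k"
    and "CARD('n) > 2 * k - t"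
    and "aspace (int t) \<delta>"
    and "aspace (int k) \<pi>"
    and "aspace (int t - 1) (\<pi> \<inter> \<delta>)"
    and S1_sub: "\<forall>A\<in>S1. aspace (int k) A \<and> A \<subseteq> aspan (\<pi> \<union> \<delta>)"
    and "\<pi> \<in> S1"
    and S1_prop: "\<forall>A\<in>S1. \<forall>B\<in>S1. A \<noteq> B \<longrightarrow> direction A \<noteq> direction B"
    and S1_prop2: "\<forall>A\<in>S1. \<not> direction \<delta> \<subseteq> direction A"
    and S1_max: "\<forall>C. aspace (int k) C \<and> C \<subseteq> aspan (\<pi> \<union> \<delta>) \<and> C \<notin> S1 \<longrightarrow>
        \<not> ((\<forall>A\<in>insert C S1. \<forall>B\<in>insert C S1. A \<noteq> B \<longrightarrow> direction A \<noteq> direction B)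
           \<and> (\<forall>A\<in>insert C S1. \<not> direction \<delta> \<subseteq> direction A))"
  shows "let q = real CARD('a); n = CARD('n);
             S2 = {A. aspace (int k) A \<and> \<delta> \<subseteq> A \<and> meets_in_at_least (int t + 1) A (aspan (\<pi> \<union> \<delta>))};
             S = S1 \<union> S2
         in maximal_t_intersecting k t S
            \<and> real (card S) = theta q k - theta q (k - t) + qbinom q (n - t) (k - t)
                 - q ^ ((k - t + 1) * (k - t)) * qbinom q (n - k - 1) (k - t)
            \<and> theta q k - theta q (k - t) + qbinom q (n - t) (k - t)
                 - q ^ ((k - t + 1) * (k - t)) * qbinom q (n - k - 1) (k - t)
              = theta q k + (\<Sum>j<k - t - 1. qbinom q (k - t + 1) (j + 1)
                   * q ^ ((k - t - j) * (k - t - j - 1)) * qbinom q (n - k - 1) (k - t - j - 1))"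
proof -
  interpret t_intersecting_construction \<pi> \<delta> S1 k t
    using assms by unfold_locales
  define q n where "q = real CARD('a)" and "n = CARD('n)"
  have "q > 1"
    using card_field_ge_2[where 'a='a] by (simp add: q_def)
  have "n - t = (n - k - 1) + (k - t + 1)" "k - t > 0"
    using assms(1,2) by (simp_all add: n_def)
  have vandermonde: "qbinom q (n - t) (k - t)
      = q ^ ((k - t + 1) * (k - t)) * qbinom q (n - k - 1) (k - t) + theta q (k - t)
        + (\<Sum>j<k - t - 1. qbinom q (k - t + 1) (j + 1)
            * q ^ ((k - t - j) * (k - t - j - 1)) * qbinom q (n - k - 1) (k - t - j - 1))"
    using qbinom_vandermonde_ends[OF \<open>q > 1\<close> \<open>k - t > 0\<close>, of "n - k - 1"]
    unfolding \<open>n - t = (n - k - 1) + (k - t + 1)\<close> .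
  have "real (card (S1 \<union> S2)) = real (card S1) + real (card S2)"
    using S1_S2_disjoint by (simp add: card_Un_disjoint)
  then show ?thesis
    unfolding Let_def S2_def[symmetric] q_def[symmetric] n_def[symmetric]
    using maximal_t_intersecting_S1_S2 card_S1 card_S2 vandermonde by (simp add: q_def n_def)
qed

end
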